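(* Let $X$ be a compact topological space equipped with a continuous action of a strongly sofic monoid $M$, and let $\Sigma=(D_i,\sigma_i)_{i\in I}$ be a strong sofic approximation of $M$. Let $\rho$ and $\rho'$ be continuous pseudometrics on $X$ with $\rho'$ dynamically generating for $(X,M)$. Let $F\subset M$ be finite and $\delta>0$. Then there exist a finite subset $F'\subset M$, $\delta'>0$ and $i_0\in I$ such that $\operatorname{Map}(X,M,\rho',F',\delta',\sigma_i)\subset\operatorname{Map}(X,M,\rho,F,\delta,\sigma_i)$ for all $i\ge i_0$.
   Context: Hamming metric on $\operatorname{Map}(D)$ (maps $D\to D$, $D$ finite non-empty): $d_D^{\mathrm{Ham}}(f,g)=\frac{1}{|D|}|\{v:f(v)\ne g(v)\}|$. A strong sofic approximation of $M$ is a net $(D_i,\sigma_i)_{i\in I}$ over a directed set, $D_i$ non-empty finite, $\sigma_i\colon M\to\operatorname{Map}(D_i)$, with $\sigma_i(1_M)=\mathrm{Id}_{D_i}$; $\lim_i d^{\mathrm{Ham}}_{D_i}(\sigma_i(m_1m_2),\sigma_i(m_1)\sigma_i(m_2))=0$ for all $m_1,m_2$; $\lim_i d^{\mathrm{Ham}}_{D_i}(\sigma_i(m_1),\sigma_i(m_2))=1$ for distinct $m_1,m_2$; and for every finite $K\subset M$ an integer $\Delta_K\ge1$ with $|\sigma_i(k)^{-1}(v)|\le\Delta_K$ for all $i$, $k\in K$, $v\in D_i$. A monoid is strongly sofic iff it has one. A pseudometric $\rho'$ is dynamically generating if for distinct $x,y\in X$ some $m\in M$ has $\rho'(mx,my)>0$.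 For non-empty finite $D$ and a pseudometric $\rho$ on $X$, $\rho_2^D(\varphi,\psi)=(\frac{1}{|D|}\sum_{v\in D}\rho(\varphi(v),\psi(v))^2)^{1/2}$ on $X^D$, $(m\varphi)(v)=m\varphi(v)$, and for finite $F\subset M$, $\delta>0$, $\sigma\colon M\to\operatorname{Map}(D)$: $\operatorname{Map}(X,M,\rho,F,\delta,\sigma)=\{\varphi\in X^D:\rho_2^D(\varphi\circ\sigma(m),m\varphi)\le\delta\ \forall m\in F\}$. *)

theory Defs
  imports "HOL-Analysis.Analysis"
begin

definition directed_rel :: "('i \<Rightarrow> 'i \<Rightarrow> bool) \<Rightarrow> bool" where
  "directed_rel le \<longleftrightarrow> (\<forall>i. le i i) \<and> (\<forall>i j k. le i j \<longrightarrow> le j k \<longrightarrow> le i k)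
     \<and> (\<forall>i j. \<exists>k. le i k \<and> le j k)"

definition net_tendsto :: "('i \<Rightarrow> 'i \<Rightarrow> bool) \<Rightarrow> ('i \<Rightarrow> real) \<Rightarrow> real \<Rightarrow> bool" where
  "net_tendsto le a L \<longleftrightarrow> (\<forall>e>0. \<exists>i0. \<forall>i. le i0 i \<longrightarrow> \<bar>a i - L\<bar> < e)"

definition ham_dist :: "'d set \<Rightarrow> ('d \<Rightarrow> 'd) \<Rightarrow> ('d \<Rightarrow> 'd) \<Rightarrow> real" where
  "ham_dist D f g = real (card {v\<in>D. f v \<noteq> g v}) / real (card D)"

definition strong_sofic_approx ::
  "('i \<Rightarrow> 'i \<Rightarrow> bool) \<Rightarrow> ('i \<Rightarrow> 'd set) \<Rightarrow> ('i \<Rightarrow> 'm::monoid_mult \<Rightarrow> 'd \<Rightarrow> 'd) \<Rightarrow> bool" where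
  "strong_sofic_approx le D \<sigma> \<longleftrightarrow>
     directed_rel le
   \<and> (\<forall>i. finite (D i) \<and> D i \<noteq> {})
   \<and> (\<forall>i m. \<sigma> i m ` D i \<subseteq> D i)
   \<and> (\<forall>i. \<forall>v\<in>D i. \<sigma> i 1 v = v)
   \<and> (\<forall>m1 m2. net_tendsto le (\<lambda>i. ham_dist (D i) (\<sigma> i (m1 * m2)) (\<sigma> i m1 \<circ> \<sigma> i m2)) 0)
   \<and> (\<forall>m1 m2. m1 \<noteq> m2 \<longrightarrow> net_tendsto le (\<lambda>i. ham_dist (D i) (\<sigma> i m1) (\<sigma> i m2)) 1)
   \<and> (\<forall>K. finite K \<longrightarrow> (\<exists>\<Delta>::nat. \<Delta> \<ge> 1 \<and>
        (\<forall>i. \<forall>k\<in>K. \<forall>v\<in>D i. card {u\<in>D i. \<sigma> i k u = v} \<le> \<Delta>)))"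

definition monoid_action :: "('m::monoid_mult \<Rightarrow> 'x \<Rightarrow> 'x) \<Rightarrow> bool" where
  "monoid_action act \<longleftrightarrow> (\<forall>x. act 1 x = x) \<and> (\<forall>m1 m2 x. act (m1 * m2) x = act m1 (act m2 x))"

definition pseudometric :: "('x \<Rightarrow> 'x \<Rightarrow> real) \<Rightarrow> bool" where
  "pseudometric \<rho> \<longleftrightarrow> (\<forall>x. \<rho> x x = 0) \<and> (\<forall>x y. \<rho> x y \<ge> 0) \<and> (\<forall>x y. \<rho> x y = \<rho> y x)
     \<and> (\<forall>x y z. \<rho> x z \<le> \<rho> x y + \<rho> y z)"

definition dyn_generating :: "('m \<Rightarrow> 'x \<Rightarrow> 'x) \<Rightarrow> ('x \<Rightarrow> 'x \<Rightarrow> real) \<Rightarrow> bool" where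
  "dyn_generating act \<rho> \<longleftrightarrow> (\<forall>x y. x \<noteq> y \<longrightarrow> (\<exists>m. \<rho> (act m x) (act m y) > 0))"

definition rho2 :: "'d set \<Rightarrow> ('x \<Rightarrow> 'x \<Rightarrow> real) \<Rightarrow> ('d \<Rightarrow> 'x) \<Rightarrow> ('d \<Rightarrow> 'x) \<Rightarrow> real" where
  "rho2 D \<rho> \<phi> \<psi> = sqrt ((1 / real (card D)) * (\<Sum>v\<in>D. (\<rho> (\<phi> v) (\<psi> v))\<^sup>2))"

text \<open>Map(X,M,rho,F,delta,sigma); elements of X^D are functions 'd => 'x (values off D irrelevant).\<close>
definition MapSet :: "('m \<Rightarrow> 'x \<Rightarrow> 'x) \<Rightarrow> ('x \<Rightarrow> 'x \<Rightarrow> real) \<Rightarrow> 'm set \<Rightarrow> real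
      \<Rightarrow> 'd set \<Rightarrow> ('m \<Rightarrow> 'd \<Rightarrow> 'd) \<Rightarrow> ('d \<Rightarrow> 'x) set" where
  "MapSet act \<rho> F \<delta> D \<sigma> = {\<phi>. \<forall>m\<in>F. rho2 D \<rho> (\<phi> \<circ> \<sigma> m) (\<lambda>v. act m (\<phi> v)) \<le> \<delta>}"

end

theory Submission
  imports Defs
begin

text \<open>
  Compactness makes dynamical generation uniform: there are a finite \<open>L \<subseteq> M\<close> and \<open>\<eta> > 0\<close>
  such that \<open>\<rho>(x, y) < \<epsilon>\<close> whenever \<open>\<rho>'(m x, m y) < \<eta>\<close> for all \<open>m \<in> L\<close>.
  Let \<open>\<phi>\<close> be \<open>\<delta>'\<close>-approximately \<open>\<rho>'\<close>-equivariant on \<open>L \<union> L s\<close>. By Chebyshev's inequality,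
  \<open>\<phi>(\<sigma>\<^sub>m w)\<close> and \<open>m \<phi>(w)\<close> are \<open>\<eta>/3\<close>-close for all \<open>w\<close> outside a set of proportion
  \<open>O(\<delta>'\<^sup>2/\<eta>\<^sup>2)\<close>; pulling these sets back along \<open>\<sigma>\<^sub>s\<close> costs only a factor \<open>\<Delta>\<close>, and
  \<open>\<sigma>\<^sub>m\<^sub>s = \<sigma>\<^sub>m \<sigma>\<^sub>s\<close> off a Hamming-small set. For the remaining \<open>v\<close> the triangle inequality
  through \<open>\<phi>(\<sigma>\<^sub>m \<sigma>\<^sub>s v)\<close> gives \<open>\<rho>'(m \<phi>(\<sigma>\<^sub>s v), m s \<phi>(v)) < \<eta>\<close> for all \<open>m \<in> L\<close>, hence
  \<open>\<rho>(\<phi>(\<sigma>\<^sub>s v), s \<phi>(v)) < \<epsilon>\<close>; on the small exceptional set \<open>\<rho>\<close> is bounded by compactness.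
\<close>

lemma directed_eventually_conj:
  assumes "directed_rel le"
    and "\<exists>i0. \<forall>i. le i0 i \<longrightarrow> P i" and "\<exists>i0. \<forall>i. le i0 i \<longrightarrow> Q i"
  shows "\<exists>i0. \<forall>i. le i0 i \<longrightarrow> P i \<and> Q i"
proof -
  obtain a b where a: "\<forall>i. le a i \<longrightarrow> P i" and b: "\<forall>i. le b i \<longrightarrow> Q i"
    using assms(2,3) by blast
  obtain k where "le a k" "le b k"
    using assms(1) unfolding directed_rel_def by blast
  with a b assms(1) show ?thesis
    unfolding directed_rel_def by blast
qed

lemma directed_eventually_ball_finite:
  assumes "directed_rel le" and "finite S" and "\<forall>x\<in>S. \<exists>i0. \<forall>i. le i0 i \<longrightarrow> P x i"
  shows "\<exists>i0. \<forall>i. le i0 i \<longrightarrow> (\<forall>x\<in>S. P x i)"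
  using assms(2,3)
proof (induction S rule: finite_induct)
  case empty
  then show ?case by simp
next
  case (insert a S)
  then have "\<exists>i0. \<forall>i. le i0 i \<longrightarrow> P a i \<and> (\<forall>x\<in>S. P x i)"
    by (intro directed_eventually_conj[OF assms(1)]) auto
  then show ?case by auto
qed

lemma sofic_eventually_ham_dist_mult_less:
  assumes "strong_sofic_approx le D \<sigma>" and "finite P" and "\<kappa> > 0"
  shows "\<exists>i0. \<forall>i. le i0 i \<longrightarrow>
           (\<forall>(m1, m2)\<in>P. ham_dist (D i) (\<sigma> i (m1 * m2)) (\<sigma> i m1 \<circ> \<sigma> i m2) < \<kappa>)"
proof -
  have "\<exists>i0. \<forall>i. le i0 i \<longrightarrow> ham_dist (D i) (\<sigma> i (m1 * m2)) (\<sigma> i m1 \<circ> \<sigma> i m2) < \<kappa>"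
    for m1 m2
  proof -
    have "net_tendsto le (\<lambda>i. ham_dist (D i) (\<sigma> i (m1 * m2)) (\<sigma> i m1 \<circ> \<sigma> i m2)) 0"
      using assms(1) unfolding strong_sofic_approx_def by blast
    with assms(3) show ?thesis
      unfolding net_tendsto_def by fastforce
  qed
  moreover have "directed_rel le"
    using assms(1) unfolding strong_sofic_approx_def by blast
  ultimately have "\<exists>i0. \<forall>i. le i0 i \<longrightarrow> (\<forall>p\<in>P.
      ham_dist (D i) (\<sigma> i (fst p * snd p)) (\<sigma> i (fst p) \<circ> \<sigma> i (snd p)) < \<kappa>)"
    by (intro directed_eventually_ball_finite[OF _ assms(2)]) auto
  then show ?thesis
    by (simp add: case_prod_beta)
qed

lemma card_exceed_le_rho2:
  assumes "finite D" and "D \<noteq> {}" and "rho2 D \<rho> \<phi> \<psi> \<le> d" and "t > 0"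
  shows "real (card {v\<in>D. t < \<rho> (\<phi> v) (\<psi> v)}) \<le> (d / t)\<^sup>2 * real (card D)"
proof -
  let ?E = "{v\<in>D. t < \<rho> (\<phi> v) (\<psi> v)}"
  have "real (card ?E) * t\<^sup>2 = (\<Sum>v\<in>?E. t\<^sup>2)"
    by simp
  also have "\<dots> \<le> (\<Sum>v\<in>?E. (\<rho> (\<phi> v) (\<psi> v))\<^sup>2)"
    by (rule sum_mono) (use assms(4) in \<open>auto intro!: power_strict_mono less_imp_le\<close>)
  also have "\<dots> \<le> (\<Sum>v\<in>D. (\<rho> (\<phi> v) (\<psi> v))\<^sup>2)"
    by (rule sum_mono2) (use assms(1) in auto)
  also have "\<dots> \<le> d\<^sup>2 * real (card D)"
  proof -
    have "1 / real (card D) * (\<Sum>v\<in>D. (\<rho> (\<phi> v) (\<psi> v))\<^sup>2) \<le> d\<^sup>2"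
      using assms(3) unfolding rho2_def by (rule sqrt_le_D)
    moreover have "real (card D) > 0"
      using assms(1,2) by auto
    ultimately show ?thesis
      by (simp add: pos_divide_le_eq)
  qed
  finally show ?thesis
    using assms(4) by (simp add: field_simps power_divide)
qed

lemma rho2_le_of_small_outside:
  assumes "finite D" and "D \<noteq> {}" and "Bad \<subseteq> D"
    and small: "\<And>v. v \<in> D - Bad \<Longrightarrow> \<rho> (\<phi> v) (\<psi> v) \<le> \<epsilon>"
    and nonneg: "\<And>x y. 0 \<le> \<rho> x y" and bounded: "\<And>x y. \<rho> x y \<le> B"
    and card_Bad: "real (card Bad) \<le> c * real (card D)"
    and "\<epsilon>\<^sup>2 + B\<^sup>2 * c \<le> \<delta>\<^sup>2" and "0 \<le> \<delta>"
  shows "rho2 D \<rho> \<phi> \<psi> \<le> \<delta>"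
proof -
  define n where "n = real (card D)"
  have "n > 0"
    using assms(1,2) unfolding n_def by auto
  have "(\<Sum>v\<in>D. (\<rho> (\<phi> v) (\<psi> v))\<^sup>2)
      = (\<Sum>v\<in>D - Bad. (\<rho> (\<phi> v) (\<psi> v))\<^sup>2) + (\<Sum>v\<in>Bad. (\<rho> (\<phi> v) (\<psi> v))\<^sup>2)"
    by (rule sum.subset_diff[OF assms(3,1)])
  also have "\<dots> \<le> (\<Sum>v\<in>D - Bad. \<epsilon>\<^sup>2) + (\<Sum>v\<in>Bad. B\<^sup>2)"
    by (intro add_mono sum_mono power_mono small bounded nonneg)
  also have "\<dots> \<le> n * \<epsilon>\<^sup>2 + real (card Bad) * B\<^sup>2"
    using card_mono[OF assms(1), of "D - Bad"] unfolding n_def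
    by (simp add: mult_right_mono)
  also have "\<dots> \<le> n * \<epsilon>\<^sup>2 + c * n * B\<^sup>2"
    using card_Bad unfolding n_def by (simp add: mult_right_mono)
  also have "\<dots> \<le> n * \<delta>\<^sup>2"
    using mult_left_mono[OF assms(8), of n] \<open>n > 0\<close> by (simp add: algebra_simps)
  finally have "1 / n * (\<Sum>v\<in>D. (\<rho> (\<phi> v) (\<psi> v))\<^sup>2) \<le> \<delta>\<^sup>2"
    using \<open>n > 0\<close> by (simp add: field_simps)
  then show ?thesis
    unfolding rho2_def n_def using assms(9) by (rule real_le_lsqrt[rotated])
qed

lemma card_preimage_le_mult_card:
  assumes "finite W" and "\<And>w. w \<in> W \<Longrightarrow> card {u\<in>D. g u = w} \<le> \<Delta>"
  shows "card {u\<in>D. g u \<in> W} \<le> \<Delta> * card W"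
proof -
  have "{u\<in>D. g u \<in> W} = (\<Union>w\<in>W. {u\<in>D. g u = w})"
    by auto
  then have "card {u\<in>D. g u \<in> W} \<le> (\<Sum>w\<in>W. card {u\<in>D. g u = w})"
    using card_UN_le[OF assms(1)] by simp
  also have "\<dots> \<le> (\<Sum>w\<in>W. \<Delta>)"
    by (rule sum_mono) (rule assms(2))
  finally show ?thesis
    by (simp add: mult.commute)
qed

lemma continuous_on_compact_UNIV_bounded2:
  fixes f :: "'x::topological_space \<Rightarrow> 'x \<Rightarrow> real"
  assumes "compact (UNIV :: 'x set)" and "continuous_on UNIV (\<lambda>p. f (fst p) (snd p))"
  obtains B where "\<And>x y. f x y \<le> B"
proof -
  have "compact (UNIV :: ('x \<times> 'x) set)"
    using compact_Times[OF assms(1) assms(1)] by simp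
  from continuous_attains_sup[OF this _ assms(2)]
  obtain p where "\<forall>q. f (fst q) (snd q) \<le> f (fst p) (snd p)"
    by auto
  then show thesis
    by (metis that fst_conv snd_conv)
qed

lemma compact_uniformly_positive:
  fixes g :: "'m \<Rightarrow> 'a::topological_space \<Rightarrow> real"
  assumes "compact K" and "\<And>m. continuous_on UNIV (g m)" and "\<And>p. p \<in> K \<Longrightarrow> \<exists>m. g m p > 0"
  obtains L \<eta> where "finite L" and "\<eta> > 0" and "\<And>p. p \<in> K \<Longrightarrow> \<exists>m\<in>L. \<eta> < g m p"
proof -
  define U where "U c = {p. 1 / real (Suc (snd c)) < g (fst c) p}" for c :: "'m \<times> nat"
  have "open (U c)" for c
    unfolding U_def by (intro open_Collect_less continuous_on_const assms(2))
  moreover have "K \<subseteq> (\<Union>c. U c)"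
  proof
    fix p assume "p \<in> K"
    then obtain m where "g m p > 0"
      using assms(3) by blast
    then obtain k where "inverse (real (Suc k)) < g m p"
      using reals_Archimedean by blast
    then have "p \<in> U (m, k)"
      unfolding U_def by (simp add: inverse_eq_divide)
    then show "p \<in> (\<Union>c. U c)"
      by blast
  qed
  ultimately obtain T where "finite T" and T: "K \<subseteq> (\<Union>c\<in>T. U c)"
    using compactE_image[OF assms(1)] by metis
  define \<eta> where "\<eta> = 1 / real (Suc (\<Sum>c\<in>T. snd c))"
  show thesis
  proof (rule that[of "fst ` T" \<eta>])
    show "finite (fst ` T)"
      using \<open>finite T\<close> by simp
    show "\<eta> > 0"
      unfolding \<eta>_def by (simp add: add_pos_nonneg sum_nonneg)
    fix p assume "p \<in> K"
    then obtain c where "c \<in> T" and "p \<in> U c"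
      using T by blast
    have "real (snd c) \<le> (\<Sum>c\<in>T. real (snd c))"
      using member_le_sum[OF \<open>c \<in> T\<close> _ \<open>finite T\<close>, of "\<lambda>c. real (snd c)"] by simp
    then have "\<eta> \<le> 1 / real (Suc (snd c))"
      unfolding \<eta>_def by (intro frac_le) auto
    with \<open>p \<in> U c\<close> \<open>c \<in> T\<close> show "\<exists>m\<in>fst ` T. \<eta> < g m p"
      unfolding U_def by force
  qed
qed

lemma dyn_generating_uniform:
  fixes act :: "'m \<Rightarrow> 'x::topological_space \<Rightarrow> 'x" and \<rho> \<rho>' :: "'x \<Rightarrow> 'x \<Rightarrow> real"
  assumes "compact (UNIV :: 'x set)" and "\<And>m. continuous_on UNIV (act m)"
    and "continuous_on UNIV (\<lambda>p. \<rho> (fst p) (snd p))"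
    and "continuous_on UNIV (\<lambda>p. \<rho>' (fst p) (snd p))"
    and "dyn_generating act \<rho>'" and "\<And>x. \<rho> x x = 0" and "\<epsilon> > 0"
  obtains L \<eta> where "finite L" and "\<eta> > 0"
    and "\<And>x y. (\<forall>m\<in>L. \<rho>' (act m x) (act m y) < \<eta>) \<Longrightarrow> \<rho> x y < \<epsilon>"
proof -
  define K where "K = {p :: 'x \<times> 'x. \<epsilon> \<le> \<rho> (fst p) (snd p)}"
  define g where "g m p = \<rho>' (act m (fst p)) (act m (snd p))" for m p
  have "compact K"
  proof -
    have "closed K"
      unfolding K_def by (rule closed_Collect_le[OF continuous_on_const assms(3)])
    moreover have "compact (UNIV :: ('x \<times> 'x) set)"
      using compact_Times[OF assms(1) assms(1)] by simp
    ultimately show ?thesis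
      using closed_Int_compact[of K UNIV] by simp
  qed
  have g_cont: "continuous_on UNIV (g m)" for m
  proof -
    have "continuous_on UNIV (\<lambda>p::'x \<times> 'x. (act m (fst p), act m (snd p)))"
      by (intro continuous_on_Pair continuous_on_compose2[OF assms(2) continuous_on_fst]
          continuous_on_compose2[OF assms(2) continuous_on_snd]) auto
    then show ?thesis
      using continuous_on_compose2[OF assms(4)] unfolding g_def by fastforce
  qed
  have g_pos: "\<exists>m. g m p > 0" if "p \<in> K" for p
  proof -
    have "fst p \<noteq> snd p"
      using that assms(6,7) unfolding K_def by force
    then show ?thesis
      using assms(5) unfolding dyn_generating_def g_def by blast
  qed
  obtain L \<eta> where "finite L" "\<eta> > 0" and L: "\<And>p. p \<in> K \<Longrightarrow> \<exists>m\<in>L. \<eta> < g m p"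
    using compact_uniformly_positive[OF \<open>compact K\<close> g_cont g_pos] by blast
  show thesis
  proof (rule that[OF \<open>finite L\<close> \<open>\<eta> > 0\<close>])
    fix x y assume "\<forall>m\<in>L. \<rho>' (act m x) (act m y) < \<eta>"
    then have "(x, y) \<notin> K"
      using L unfolding g_def by fastforce
    then show "\<rho> x y < \<epsilon>"
      unfolding K_def by simp
  qed
qed

lemma tolerances_exist:
  fixes B \<eta> \<delta> :: real and l \<Delta> :: nat
  assumes "\<eta> > 0" and "\<delta> > 0"
  obtains \<kappa> \<delta>' where "\<kappa> > 0" and "\<delta>' > 0"
    and "(\<delta> / 2)\<^sup>2 + B\<^sup>2 * (real l * ((real \<Delta> + 1) * (3 * \<delta>' / \<eta>)\<^sup>2 + \<kappa>)) \<le> \<delta>\<^sup>2"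
proof -
  define a where "a = B\<^sup>2 * real l"
  define \<kappa> where "\<kappa> = \<delta>\<^sup>2 / (4 * (a + 1))"
  define \<delta>' where "\<delta>' = \<eta> / 3 * sqrt (\<kappa> / (real \<Delta> + 1))"
  have "a \<ge> 0"
    unfolding a_def by simp
  then have "\<kappa> > 0"
    unfolding \<kappa>_def using assms(2) by simp
  then have "\<delta>' > 0"
    unfolding \<delta>'_def using assms(1) by simp
  have \<delta>': "(real \<Delta> + 1) * (3 * \<delta>' / \<eta>)\<^sup>2 = \<kappa>"
    unfolding \<delta>'_def using assms(1) \<open>\<kappa> > 0\<close> by (simp add: power_mult_distrib power_divide)
  have "a * (\<kappa> + \<kappa>) \<le> \<delta>\<^sup>2 / 2"
  proof -
    have "4 * (a + 1) * \<kappa> = \<delta>\<^sup>2"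
      unfolding \<kappa>_def using \<open>a \<ge> 0\<close> by simp
    with \<open>\<kappa> > 0\<close> show ?thesis
      by (simp add: algebra_simps)
  qed
  then have "B\<^sup>2 * (real l * (\<kappa> + \<kappa>)) \<le> \<delta>\<^sup>2 / 2"
    unfolding a_def by (simp only: mult.assoc)
  moreover have "(\<delta> / 2)\<^sup>2 = \<delta>\<^sup>2 / 4"
    by (simp add: power_divide)
  ultimately have "(\<delta> / 2)\<^sup>2 + B\<^sup>2 * (real l * ((real \<Delta> + 1) * (3 * \<delta>' / \<eta>)\<^sup>2 + \<kappa>)) \<le> \<delta>\<^sup>2"
    unfolding \<delta>' using zero_le_power2[of \<delta>] by linarith
  with \<open>\<kappa> > 0\<close> \<open>\<delta>' > 0\<close> show thesis
    by (rule that)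
qed

lemma MapSet_eq_INT_singleton: "MapSet act \<rho> F \<delta> D \<sigma> = (\<Inter>s\<in>F. MapSet act \<rho> {s} \<delta> D \<sigma>)"
  unfolding MapSet_def by auto

lemma MapSet_antimono: "F \<subseteq> F' \<Longrightarrow> MapSet act \<rho> F' \<delta> D \<sigma> \<subseteq> MapSet act \<rho> F \<delta> D \<sigma>"
  unfolding MapSet_def by auto

lemma card_exceptional_le:
  fixes \<sigma> :: "'m::monoid_mult \<Rightarrow> 'd \<Rightarrow> 'd" and far :: "'m \<Rightarrow> 'd set"
  assumes "finite D" and "D \<noteq> {}" and "finite L"
    and far_sub: "\<And>m. far m \<subseteq> D"
    and card_far: "\<And>m. m \<in> L \<union> (\<lambda>m. m * s) ` L \<Longrightarrow> real (card (far m)) \<le> c * real (card D)"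
    and fibres: "\<And>v. v \<in> D \<Longrightarrow> card {u\<in>D. \<sigma> s u = v} \<le> \<Delta>"
    and ham: "\<And>m. m \<in> L \<Longrightarrow> ham_dist D (\<sigma> (m * s)) (\<sigma> m \<circ> \<sigma> s) < \<kappa>"
  shows "real (card (\<Union>m\<in>L. {v\<in>D. \<sigma> s v \<in> far m} \<union> {v\<in>D. \<sigma> (m * s) v \<noteq> \<sigma> m (\<sigma> s v)} \<union> far (m * s)))
    \<le> real (card L) * ((real \<Delta> + 1) * c + \<kappa>) * real (card D)"
proof -
  define n where "n = real (card D)"
  define pull where "pull m = {v\<in>D. \<sigma> s v \<in> far m}" for m
  define split where "split m = {v\<in>D. \<sigma> (m * s) v \<noteq> \<sigma> m (\<sigma> s v)}" for m
  have "real (card (pull m \<union> split m \<union> far (m * s))) \<le> ((real \<Delta> + 1) * c + \<kappa>) * n"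
    if "m \<in> L" for m
  proof -
    have "card (pull m \<union> split m \<union> far (m * s)) \<le> card (pull m) + card (split m) + card (far (m * s))"
      using card_Un_le[of "pull m \<union> split m" "far (m * s)"] card_Un_le[of "pull m" "split m"]
      by linarith
    from of_nat_mono[OF this] have union: "real (card (pull m \<union> split m \<union> far (m * s)))
        \<le> real (card (pull m)) + real (card (split m)) + real (card (far (m * s)))"
      by simp
    have "card (pull m) \<le> \<Delta> * card (far m)"
      unfolding pull_def
    proof (rule card_preimage_le_mult_card)
      show "finite (far m)"
        using far_sub \<open>finite D\<close> by (rule finite_subset)
      show "card {u\<in>D. \<sigma> s u = w} \<le> \<Delta>" if "w \<in> far m" for w
        using fibres that far_sub by blast
    qed
    from of_nat_mono[OF this] have "real (card (pull m)) \<le> real \<Delta> * real (card (far m))"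
      by simp
    also have "\<dots> \<le> real \<Delta> * (c * n)"
      using card_far[of m] that unfolding n_def by (intro mult_left_mono) auto
    finally have "real (card (pull m)) \<le> real \<Delta> * (c * n)" .
    moreover have "real (card (split m)) < \<kappa> * n"
      using ham[OF that] \<open>finite D\<close> \<open>D \<noteq> {}\<close> unfolding ham_dist_def split_def n_def
      by (simp add: pos_divide_less_eq card_gt_0_iff)
    moreover have "real (card (far (m * s))) \<le> c * n"
      using card_far that unfolding n_def by blast
    moreover have "((real \<Delta> + 1) * c + \<kappa>) * n = real \<Delta> * (c * n) + \<kappa> * n + c * n"
      by (simp add: algebra_simps)
    ultimately show ?thesis
      using union by linarith
  qed
  moreover have "card (\<Union>m\<in>L. pull m \<union> split m \<union> far (m * s))
      \<le> (\<Sum>m\<in>L. card (pull m \<union> split m \<union> far (m * s)))"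
    by (rule card_UN_le[OF \<open>finite L\<close>])
  from of_nat_mono[OF this] have "real (card (\<Union>m\<in>L. pull m \<union> split m \<union> far (m * s)))
      \<le> (\<Sum>m\<in>L. real (card (pull m \<union> split m \<union> far (m * s))))"
    by simp
  ultimately have "real (card (\<Union>m\<in>L. pull m \<union> split m \<union> far (m * s)))
      \<le> (\<Sum>m\<in>L. ((real \<Delta> + 1) * c + \<kappa>) * n)"
    using sum_mono[of L] by (meson order_trans)
  then show ?thesis
    unfolding pull_def split_def n_def by simp
qed

lemma MapSet_subset_MapSet_singleton:
  fixes \<sigma> :: "'m::monoid_mult \<Rightarrow> 'd \<Rightarrow> 'd" and act :: "'m \<Rightarrow> 'x \<Rightarrow> 'x"
  assumes D: "finite D" "D \<noteq> {}" "\<sigma> s ` D \<subseteq> D"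
    and act_mult: "\<And>m x. act (m * s) x = act m (act s x)"
    and "pseudometric \<rho>'"
    and \<rho>_nonneg: "\<And>x y. 0 \<le> \<rho> x y" and \<rho>_bounded: "\<And>x y. \<rho> x y \<le> B"
    and generating: "\<And>x y. (\<forall>m\<in>L. \<rho>' (act m x) (act m y) < \<eta>) \<Longrightarrow> \<rho> x y < \<epsilon>"
    and "finite L" and "\<eta> > 0"
    and fibres: "\<And>v. v \<in> D \<Longrightarrow> card {u\<in>D. \<sigma> s u = v} \<le> \<Delta>"
    and ham: "\<And>m. m \<in> L \<Longrightarrow> ham_dist D (\<sigma> (m * s)) (\<sigma> m \<circ> \<sigma> s) < \<kappa>"
    and tolerances: "\<epsilon>\<^sup>2 + B\<^sup>2 * (real (card L) * ((real \<Delta> + 1) * (3 * \<delta>' / \<eta>)\<^sup>2 + \<kappa>)) \<le> \<delta>\<^sup>2"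
    and "0 \<le> \<delta>"
  shows "MapSet act \<rho>' (L \<union> (\<lambda>m. m * s) ` L) \<delta>' D \<sigma> \<subseteq> MapSet act \<rho> {s} \<delta> D \<sigma>"
proof
  fix \<phi> assume "\<phi> \<in> MapSet act \<rho>' (L \<union> (\<lambda>m. m * s) ` L) \<delta>' D \<sigma>"
  then have \<phi>: "rho2 D \<rho>' (\<phi> \<circ> \<sigma> m) (\<lambda>w. act m (\<phi> w)) \<le> \<delta>'"
    if "m \<in> L \<union> (\<lambda>m. m * s) ` L" for m
    using that unfolding MapSet_def by blast
  define far where "far m = {w\<in>D. \<eta> / 3 < \<rho>' (\<phi> (\<sigma> m w)) (act m (\<phi> w))}" for m
  define Bad where "Bad = (\<Union>m\<in>L. {v\<in>D. \<sigma> s v \<in> far m}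
    \<union> {v\<in>D. \<sigma> (m * s) v \<noteq> \<sigma> m (\<sigma> s v)} \<union> far (m * s))"
  have card_Bad: "real (card Bad)
      \<le> real (card L) * ((real \<Delta> + 1) * (3 * \<delta>' / \<eta>)\<^sup>2 + \<kappa>) * real (card D)"
    unfolding Bad_def
  proof (rule card_exceptional_le[OF D(1,2) \<open>finite L\<close> _ _ fibres ham])
    show "far m \<subseteq> D" for m
      unfolding far_def by blast
    show "real (card (far m)) \<le> (3 * \<delta>' / \<eta>)\<^sup>2 * real (card D)" if "m \<in> L \<union> (\<lambda>m. m * s) ` L" for m
      using card_exceed_le_rho2[OF D(1,2) \<phi>[OF that], of "\<eta> / 3"] \<open>\<eta> > 0\<close>
      unfolding far_def by (simp add: field_simps)
  qed
  have near: "\<rho> (\<phi> (\<sigma> s v)) (act s (\<phi> v)) \<le> \<epsilon>" if v: "v \<in> D - Bad" for v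
  proof -
    have "\<rho>' (act m (\<phi> (\<sigma> s v))) (act m (act s (\<phi> v))) < \<eta>" if "m \<in> L" for m
    proof -
      have "\<sigma> s v \<notin> far m" and "\<sigma> (m * s) v = \<sigma> m (\<sigma> s v)" and "v \<notin> far (m * s)"
        using that v unfolding Bad_def by blast+
      with D(3) v have "\<rho>' (\<phi> (\<sigma> m (\<sigma> s v))) (act m (\<phi> (\<sigma> s v))) \<le> \<eta> / 3"
        and "\<rho>' (\<phi> (\<sigma> m (\<sigma> s v))) (act m (act s (\<phi> v))) \<le> \<eta> / 3"
        unfolding far_def by (auto simp: act_mult not_less)
      moreover have "\<rho>' (act m (\<phi> (\<sigma> s v))) (act m (act s (\<phi> v)))
          \<le> \<rho>' (\<phi> (\<sigma> m (\<sigma> s v))) (act m (\<phi> (\<sigma> s v)))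
            + \<rho>' (\<phi> (\<sigma> m (\<sigma> s v))) (act m (act s (\<phi> v)))"
        using \<open>pseudometric \<rho>'\<close> unfolding pseudometric_def by metis
      ultimately show ?thesis
        using \<open>\<eta> > 0\<close> by linarith
    qed
    then show ?thesis
      using generating less_imp_le by blast
  qed
  have "Bad \<subseteq> D"
    unfolding Bad_def far_def by auto
  have "rho2 D \<rho> (\<phi> \<circ> \<sigma> s) (\<lambda>v. act s (\<phi> v)) \<le> \<delta>"
    by (rule rho2_le_of_small_outside[OF D(1,2) \<open>Bad \<subseteq> D\<close> _ \<rho>_nonneg \<rho>_bounded
          card_Bad tolerances \<open>0 \<le> \<delta>\<close>]) (use near in simp)
  then show "\<phi> \<in> MapSet act \<rho> {s} \<delta> D \<sigma>"
    unfolding MapSet_def by simp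
qed

theorem lemma4p5:
  fixes act :: "'m::monoid_mult \<Rightarrow> 'x::topological_space \<Rightarrow> 'x"
    and le :: "'i \<Rightarrow> 'i \<Rightarrow> bool"
    and D :: "'i \<Rightarrow> 'd set"
    and \<sigma> :: "'i \<Rightarrow> 'm \<Rightarrow> 'd \<Rightarrow> 'd"
    and \<rho> \<rho>' :: "'x \<Rightarrow> 'x \<Rightarrow> real"
    and F :: "'m set" and \<delta> :: real
  assumes "compact (UNIV :: 'x set)"
    and "monoid_action act"
    and "\<And>m. continuous_on UNIV (act m)"
    and "strong_sofic_approx le D \<sigma>"
    and "pseudometric \<rho>" and "continuous_on UNIV (\<lambda>p. \<rho> (fst p) (snd p))"
    and "pseudometric \<rho>'" and "continuous_on UNIV (\<lambda>p. \<rho>' (fst p) (snd p))"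
    and "dyn_generating act \<rho>'"
    and "finite F" and "\<delta> > 0"
  shows "\<exists>F' \<delta>' i0. finite F' \<and> \<delta>' > 0 \<and>
           (\<forall>i. le i0 i \<longrightarrow> MapSet act \<rho>' F' \<delta>' (D i) (\<sigma> i) \<subseteq> MapSet act \<rho> F \<delta> (D i) (\<sigma> i))"
proof -
  have D: "\<And>i. finite (D i)" "\<And>i. D i \<noteq> {}" "\<And>i m. \<sigma> i m ` D i \<subseteq> D i"
    using assms(4) unfolding strong_sofic_approx_def by auto
  have act_mult: "\<And>m s x. act (m * s) x = act m (act s x)"
    using assms(2) unfolding monoid_action_def by blast
  have \<rho>_nonneg: "\<And>x y. 0 \<le> \<rho> x y"
    using assms(5) unfolding pseudometric_def by blast
  obtain \<Delta> :: nat where fibres: "\<And>i s v. s \<in> F \<Longrightarrow> v \<in> D i \<Longrightarrow> card {u\<in>D i. \<sigma> i s u = v} \<le> \<Delta>"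
    using assms(4,10) unfolding strong_sofic_approx_def by meson
  obtain B where B: "\<And>x y. \<rho> x y \<le> B"
    using continuous_on_compact_UNIV_bounded2[OF assms(1,6)] by blast
  obtain L \<eta> where "finite L" "\<eta> > 0"
    and generating: "\<And>x y. (\<forall>m\<in>L. \<rho>' (act m x) (act m y) < \<eta>) \<Longrightarrow> \<rho> x y < \<delta> / 2"
    using dyn_generating_uniform[OF assms(1,3,6,8,9), of "\<delta> / 2"] assms(5,11)
    unfolding pseudometric_def by auto
  obtain \<kappa> \<delta>' where "\<kappa> > 0" "\<delta>' > 0" and tolerances:
    "(\<delta> / 2)\<^sup>2 + B\<^sup>2 * (real (card L) * ((real \<Delta> + 1) * (3 * \<delta>' / \<eta>)\<^sup>2 + \<kappa>)) \<le> \<delta>\<^sup>2"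
    using tolerances_exist[OF \<open>\<eta> > 0\<close> assms(11)] by blast
  obtain i0 where ham: "\<And>i m s. le i0 i \<Longrightarrow> m \<in> L \<Longrightarrow> s \<in> F \<Longrightarrow>
      ham_dist (D i) (\<sigma> i (m * s)) (\<sigma> i m \<circ> \<sigma> i s) < \<kappa>"
    using sofic_eventually_ham_dist_mult_less[OF assms(4) _ \<open>\<kappa> > 0\<close>, of "L \<times> F"]
      \<open>finite L\<close> assms(10) by fastforce
  define F' where "F' = L \<union> (\<lambda>(m, s). m * s) ` (L \<times> F)"
  have "MapSet act \<rho>' F' \<delta>' (D i) (\<sigma> i) \<subseteq> MapSet act \<rho> {s} \<delta> (D i) (\<sigma> i)"
    if "le i0 i" and "s \<in> F" for i s
  proof -
    have "MapSet act \<rho>' F' \<delta>' (D i) (\<sigma> i) \<subseteq> MapSet act \<rho>' (L \<union> (\<lambda>m. m * s) ` L) \<delta>' (D i) (\<sigma> i)"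
      by (rule MapSet_antimono) (use \<open>s \<in> F\<close> in \<open>force simp: F'_def\<close>)
    also have "\<dots> \<subseteq> MapSet act \<rho> {s} \<delta> (D i) (\<sigma> i)"
      by (rule MapSet_subset_MapSet_singleton[OF D act_mult assms(7) \<rho>_nonneg B generating
            \<open>finite L\<close> \<open>\<eta> > 0\<close> fibres[OF \<open>s \<in> F\<close>] ham[OF \<open>le i0 i\<close> _ \<open>s \<in> F\<close>] tolerances
            less_imp_le[OF \<open>\<delta> > 0\<close>]])
    finally show ?thesis .
  qed
  then have "MapSet act \<rho>' F' \<delta>' (D i) (\<sigma> i) \<subseteq> MapSet act \<rho> F \<delta> (D i) (\<sigma> i)"
    if "le i0 i" for i
    using that MapSet_eq_INT_singleton[of act \<rho> F \<delta>] by blast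
  moreover have "finite F'"
    unfolding F'_def using \<open>finite L\<close> assms(10) by simp
  ultimately show ?thesis
    using \<open>\<delta>' > 0\<close> by blast
qed

end
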